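(* Let $f(\lambda)=C\,|\lambda|^{-2\alpha}(1+\lambda^2)^{-\beta}$, $\lambda\in\mathbb{R}$, with $0<C<\infty$, $0<\alpha<1/2$ and $\beta>1/2$, and let $r(t):=\int_{\mathbb{R}}e^{i\lambda t}f(\lambda)\,d\lambda$. Then $$r(t)=t^{2\alpha-1}\cdot\frac{\pi C}{\cos(\pi\alpha)\Gamma(2\alpha)}\,(1+o(1))\qquad\text{as }t\to\infty.$$ *)

theory Defs
  imports "HOL-Analysis.Analysis" "HOL-Library.Landau_Symbols"
begin

definition spec_dens :: "real \<Rightarrow> real \<Rightarrow> real \<Rightarrow> real \<Rightarrow> real" where
  "spec_dens C \<alpha> \<beta> x = C * \<bar>x\<bar> powr (-2 * \<alpha>) * (1 + x\<^sup>2) powr (-\<beta>)"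

definition cov_fun :: "real \<Rightarrow> real \<Rightarrow> real \<Rightarrow> real \<Rightarrow> complex" where
  "cov_fun C \<alpha> \<beta> t = (\<integral>x. exp (\<i> * complex_of_real (x * t)) * complex_of_real (spec_dens C \<alpha> \<beta> x) \<partial>lborel)"

end

theory Submission
  imports Defs "HOL-Probability.Characteristic_Functions"
begin

(* Gaussian subordination. Writing |\<lambda>|^(-2\<alpha>) and (1 + \<lambda>\<^sup>2)^(-\<beta>) as Gamma-mixtures of the Gaussians
   e^(-a\<lambda>\<^sup>2) and e^(-b(1 + \<lambda>\<^sup>2)), Fubini and the Fourier transform of a Gaussian give
     r(t) = C / (\<Gamma>(\<alpha>) \<Gamma>(\<beta>)) \<integral>\<^sub>0\<^sup>\<infinity> b^(\<beta>-1) e^(-b) \<integral>\<^sub>0\<^sup>\<infinity> a^(\<alpha>-1) \<surd>(\<pi>/(a+b)) e^(-t\<^sup>2/(4(a+b))) da db.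
   The substitution a = t\<^sup>2x turns the inner integral into t^(2\<alpha>-1) \<Phi>(b/t\<^sup>2), where
   \<Phi>(\<epsilon>) = \<integral>\<^sub>0\<^sup>\<infinity> x^(\<alpha>-1) \<surd>(\<pi>/(x+\<epsilon>)) e^(-1/(4(x+\<epsilon>))) dx, and dominated convergence (in x, then in b)
   shows that the outer integral tends to \<Gamma>(\<beta>) \<Phi>(0). The substitution x = 1/(4y) gives
   \<Phi>(0) = \<surd>\<pi> 2^(1-2\<alpha>) \<Gamma>(1/2-\<alpha>), and the duplication and reflection formulas turn
   \<surd>\<pi> 2^(1-2\<alpha>) \<Gamma>(1/2-\<alpha>) / \<Gamma>(\<alpha>) into \<pi> / (cos(\<pi>\<alpha>) \<Gamma>(2\<alpha>)). *)

definition fourier_transform :: "(real \<Rightarrow> real) \<Rightarrow> real \<Rightarrow> complex" where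
  "fourier_transform f t = (\<integral>x. exp (\<i> * complex_of_real (x * t)) * complex_of_real (f x) \<partial>lborel)"

lemma cov_fun_eq_fourier_transform: "cov_fun C \<alpha> \<beta> = fourier_transform (spec_dens C \<alpha> \<beta>)"
  by (simp add: fun_eq_iff cov_fun_def fourier_transform_def)

lemma has_bochner_integral_lborel_of_has_integral:
  fixes f :: "real \<Rightarrow> real"
  assumes I: "(f has_integral I) S" and nonneg: "\<And>x. x \<in> S \<Longrightarrow> 0 \<le> f x"
    and [measurable]: "S \<in> sets borel" "f \<in> borel_measurable borel"
  shows "has_bochner_integral lborel (\<lambda>x. indicator S x * f x) I"
proof (rule has_bochner_integral_nn_integral)
  show "integral\<^sup>N lborel (\<lambda>x. indicator S x * f x) = I"
    using nn_integral_has_integral_lebesgue[OF nonneg I] by simp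
  show "0 \<le> I" using has_integral_nonneg[OF I nonneg] by simp
qed (use nonneg in \<open>auto simp: indicator_def\<close>)

lemma has_bochner_integral_Gamma_scaled:
  fixes p s :: real assumes p: "p > 0" and s: "s > 0"
  shows "has_bochner_integral lborel (\<lambda>a. indicator {0<..} a * (a powr (p - 1) * exp (-(s * a))))
           (Gamma p * s powr (-p))"
proof -
  define g where "g = (\<lambda>x::real. indicator {0<..} x * (x powr (p - 1) / exp x))"
  have "has_bochner_integral lborel (\<lambda>x. indicator {0..} x * (x powr (p - 1) / exp x)) (Gamma p)"
    by (rule has_bochner_integral_lborel_of_has_integral[OF Gamma_integral_real[OF p]]) auto
  moreover have "(\<lambda>x. indicator {0..} x * (x powr (p - 1) / exp x)) = g"
    unfolding g_def by (auto simp: indicator_def fun_eq_iff)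
  ultimately have g_int: "integrable lborel g" "integral\<^sup>L lborel g = Gamma p"
    by (auto simp: has_bochner_integral_iff)
  have g_scaled: "g (0 + s * a) = s powr (p - 1) * (indicator {0<..} a * (a powr (p - 1) * exp (-(s * a))))" for a
    using s by (auto simp: g_def indicator_def powr_mult exp_minus field_simps zero_less_mult_iff)
  define I where "I = (\<integral>a. indicator {0<..} a * (a powr (p - 1) * exp (-(s * a))) \<partial>lborel)"
  have "integrable lborel (\<lambda>a. s powr (1 - p) * g (0 + s * a))"
    using lborel_integrable_real_affine[OF g_int(1), of s 0] s by (intro integrable_mult_right) simp
  also have "(\<lambda>a. s powr (1 - p) * g (0 + s * a)) = (\<lambda>a. indicator {0<..} a * (a powr (p - 1) * exp (-(s * a))))"
    using s unfolding g_scaled by (auto simp: fun_eq_iff powr_add[symmetric])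
  finally have "integrable lborel (\<lambda>a. indicator {0<..} a * (a powr (p - 1) * exp (-(s * a))))" .
  moreover have "I = Gamma p * s powr (-p)"
  proof -
    have "Gamma p = s * (\<integral>a. g (0 + s * a) \<partial>lborel)"
      using lborel_integral_real_affine[of s g 0] s g_int by simp
    also have "\<dots> = s * s powr (p - 1) * I"
      unfolding g_scaled I_def by simp
    also have "s * s powr (p - 1) = s powr p" using s by (simp add: powr_diff)
    finally show ?thesis
      using s by (simp add: powr_minus field_simps)
  qed
  ultimately show ?thesis by (simp add: has_bochner_integral_iff I_def)
qed

lemma has_bochner_integral_Gamma_inverse:
  fixes q c :: real assumes q: "q > 0" and c: "c > 0"
  shows "has_bochner_integral lborel (\<lambda>x. indicator {0<..} x * (x powr (-q - 1) * exp (-(c / x))))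
           (Gamma q * c powr (-q))"
proof -
  define S where "S = ({0<..} :: real set)"
  define f where "f = (\<lambda>x::real. x powr (-q - 1) * exp (-(c / x)))"
  have "((\<lambda>y. c powr (-q) * (y powr (q - 1) / exp y)) has_integral c powr (-q) * Gamma q) {0..}"
    by (intro has_integral_mult_right Gamma_integral_real q)
  then have "((\<lambda>y. c powr (-q) * (y powr (q - 1) / exp y)) has_integral c powr (-q) * Gamma q) S"
    unfolding S_def by (rule has_integral_spike_set_eq[THEN iffD1, rotated 2])
       (auto intro: negligible_subset[of "{0}"])
  moreover have "c powr (-q) * (y powr (q - 1) / exp y) = \<bar>-c / y\<^sup>2\<bar> * f (c / y)" if "y \<in> S" for y
    using that c unfolding S_def f_def
    by (simp add: powr_divide powr_diff powr_minus exp_minus power2_eq_square field_simps)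
  ultimately have subst_int: "((\<lambda>y. \<bar>-c / y\<^sup>2\<bar> * f (c / y)) has_integral c powr (-q) * Gamma q) S"
    by (rule has_integral_eq[rotated]) auto
  have "f absolutely_integrable_on ((\<lambda>y. c / y) ` S) \<and> integral ((\<lambda>y. c / y) ` S) f = c powr (-q) * Gamma q"
  proof (rule has_absolute_integral_change_of_variables_1'[THEN iffD1])
    show "((\<lambda>y. c / y) has_field_derivative -c / y\<^sup>2) (at y within S)" if "y \<in> S" for y
      using that unfolding S_def by (auto intro!: derivative_eq_intros simp: power2_eq_square)
    show "inj_on (\<lambda>y. c / y) S" using c unfolding S_def inj_on_def by auto
    have "0 \<le> \<bar>-c / y\<^sup>2\<bar> * f (c / y)" if "y \<in> S" for y
      using that c unfolding S_def f_def by simp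
    then show "(\<lambda>y. \<bar>-c / y\<^sup>2\<bar> * f (c / y)) absolutely_integrable_on S \<and>
          integral S (\<lambda>y. \<bar>-c / y\<^sup>2\<bar> * f (c / y)) = c powr (-q) * Gamma q"
      using subst_int by (auto intro: nonnegative_absolutely_integrable_1 integral_unique)
  qed (simp add: S_def)
  moreover have "(\<lambda>y. c / y) ` S = S"
  proof
    show "(\<lambda>y. c / y) ` S \<subseteq> S" using c unfolding S_def by auto
    show "S \<subseteq> (\<lambda>y. c / y) ` S"
    proof
      fix x assume "x \<in> S"
      then show "x \<in> (\<lambda>y. c / y) ` S" using c unfolding S_def by (auto intro!: image_eqI[of x _ "c / x"])
    qed
  qed
  ultimately have "(f has_integral c powr (-q) * Gamma q) S"
    by (auto simp: absolutely_integrable_on_def has_integral_iff)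
  then show ?thesis
    unfolding S_def f_def
    by (subst mult.commute, intro has_bochner_integral_lborel_of_has_integral) auto
qed

lemma power2_powr:
  fixes x :: real assumes "x \<noteq> 0"
  shows "(x\<^sup>2) powr c = \<bar>x\<bar> powr (2 * c)"
  using powr_powr[of "\<bar>x\<bar>" 2 c] assms by simp

lemma integrable_lborel_powr_bounds:
  fixes g :: "real \<Rightarrow> real" and p q D :: real
  assumes [measurable]: "g \<in> borel_measurable borel" and p: "p < 1" and q: "q > 1" and D: "D \<ge> 0"
    and bound_small: "\<And>x. \<bar>x\<bar> \<le> 1 \<Longrightarrow> \<bar>g x\<bar> \<le> D * \<bar>x\<bar> powr (-p)"
    and bound_large: "\<And>x. \<bar>x\<bar> > 1 \<Longrightarrow> \<bar>g x\<bar> \<le> D * \<bar>x\<bar> powr (-q)"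
  shows "integrable lborel g"
proof -
  define h where "h = (\<lambda>x::real. indicator {0..1} x * x powr (-p) + indicator {1..} x * x powr (-q))"
  have "has_bochner_integral lborel (\<lambda>x. indicator {0..1} x * x powr (-p)) (1 powr (-p + 1) / (-p + 1))"
    by (rule has_bochner_integral_lborel_of_has_integral[OF has_integral_powr_from_0]) (use p in auto)
  moreover have "has_bochner_integral lborel (\<lambda>x. indicator {1..} x * x powr (-q)) (-(1 powr (-q + 1)) / (-q + 1))"
    by (rule has_bochner_integral_lborel_of_has_integral[OF has_integral_powr_to_inf]) (use q in auto)
  ultimately have "integrable lborel h"
    unfolding h_def by (auto simp: has_bochner_integral_iff)
  moreover from this have "integrable lborel (\<lambda>x. h (- x))"
    using lborel_integrable_real_affine[of h "-1" 0] by simp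
  ultimately have "integrable lborel (\<lambda>x. D * (h x + h (- x)))"
    by auto
  then show ?thesis
  proof (rule Bochner_Integration.integrable_bound)
    have "\<bar>g x\<bar> \<le> D * (h x + h (- x))" for x
    proof (cases "\<bar>x\<bar> \<le> 1")
      case True
      then have "\<bar>x\<bar> powr (-p) \<le> h x + h (- x)"
        by (cases "x \<ge> 0") (auto simp: h_def indicator_def)
      with bound_small[OF True] D show ?thesis by (meson mult_left_mono order_trans)
    next
      case False
      then have "\<bar>x\<bar> powr (-q) \<le> h x + h (- x)"
        by (cases "x \<ge> 0") (auto simp: h_def indicator_def)
      with bound_large False D show ?thesis by (meson mult_left_mono order_trans not_le)
    qed
    moreover have "0 \<le> h x + h (- x)" for x
      by (auto simp: h_def indicator_def)
    ultimately show "AE x in lborel. norm (g x) \<le> norm (D * (h x + h (- x)))"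
      using D by (intro AE_I2) simp
  qed simp
qed

lemma fourier_transform_cmult:
  "fourier_transform (\<lambda>x. c * f x) t = complex_of_real c * fourier_transform f t"
  unfolding fourier_transform_def by (simp add: mult_ac flip: integral_mult_right_zero)

lemma fourier_transform_gaussian:
  fixes c t :: real assumes c: "c > 0"
  shows "fourier_transform (\<lambda>x. exp (-(c * x\<^sup>2))) t = complex_of_real (sqrt (pi / c) * exp (-(t\<^sup>2) / (4 * c)))"
proof -
  define s where "s = sqrt (2 * c)"
  have s: "s > 0" "s\<^sup>2 = 2 * c" using c by (auto simp: s_def)
  define u where "u = t / s"
  have "char std_normal_distribution u = complex_of_real (exp (-(u\<^sup>2) / 2))"
    by (simp add: char_std_normal_distribution)
  then have char_u: "(\<integral>x. std_normal_density x *\<^sub>R iexp (u * x) \<partial>lborel) = complex_of_real (exp (-(u\<^sup>2) / 2))"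
    unfolding char_def by (subst (asm) integral_density) auto
  have rescale: "(\<integral>x. std_normal_density x *\<^sub>R iexp (u * x) \<partial>lborel)
     = s *\<^sub>R (\<integral>x. std_normal_density (0 + s * x) *\<^sub>R iexp (u * (0 + s * x)) \<partial>lborel)"
    using lborel_integral_real_affine[of s "\<lambda>x. std_normal_density x *\<^sub>R iexp (u * x)" 0] s by simp
  have integrand: "std_normal_density (0 + s * x) *\<^sub>R iexp (u * (0 + s * x))
      = complex_of_real (1 / sqrt (2 * pi)) * (exp (\<i> * complex_of_real (x * t)) * complex_of_real (exp (-(c * x\<^sup>2))))" for x
    using s unfolding std_normal_density_def u_def
    by (simp add: power_mult_distrib scaleR_conv_of_real mult_ac)
  have "fourier_transform (\<lambda>x. exp (-(c * x\<^sup>2))) t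
     = complex_of_real (sqrt (2 * pi) / s) * complex_of_real (exp (-(u\<^sup>2) / 2))"
    using char_u rescale s unfolding integrand fourier_transform_def
    by (simp add: scaleR_conv_of_real field_simps real_sqrt_mult)
  moreover have "sqrt (2 * pi) / s = sqrt (pi / c)"
    using c unfolding s_def by (simp add: real_sqrt_divide[symmetric])
  moreover have "u\<^sup>2 / 2 = t\<^sup>2 / (4 * c)"
    using s c unfolding u_def by (simp add: power_divide)
  ultimately show ?thesis by (simp flip: of_real_mult)
qed

lemma fourier_transform_mixture:
  fixes K :: "real \<Rightarrow> real \<Rightarrow> real" and F :: "real \<Rightarrow> real"
  assumes [measurable]: "case_prod K \<in> borel_measurable (lborel \<Otimes>\<^sub>M lborel)"
    and K_nonneg: "\<And>x s. 0 \<le> K x s"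
    and K_integral: "AE x in lborel. has_bochner_integral lborel (K x) (F x)"
    and F_integrable: "integrable lborel F"
  shows "fourier_transform F t = (\<integral>s. fourier_transform (\<lambda>x. K x s) t \<partial>lborel)"
proof -
  define g where "g = (\<lambda>x s. exp (\<i> * complex_of_real (x * t)) * complex_of_real (K x s))"
  have [measurable]: "case_prod g \<in> borel_measurable (lborel \<Otimes>\<^sub>M lborel)"
    unfolding g_def by measurable
  have "(\<integral>\<^sup>+z. ennreal (norm (case_prod g z)) \<partial>(lborel \<Otimes>\<^sub>M lborel))
      = (\<integral>\<^sup>+x. (\<integral>\<^sup>+s. ennreal (K x s) \<partial>lborel) \<partial>lborel)"
    using K_nonneg by (subst lborel.nn_integral_fst[symmetric]) (auto simp: g_def norm_mult split: prod.splits)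
  also have "\<dots> = (\<integral>\<^sup>+x. ennreal (F x) \<partial>lborel)"
    using K_integral
    by (intro nn_integral_cong_AE) (auto elim!: AE_mp simp: has_bochner_integral_iff K_nonneg nn_integral_eq_integral)
  also have "\<dots> \<le> (\<integral>\<^sup>+x. ennreal (norm (F x)) \<partial>lborel)"
    by (intro nn_integral_mono ennreal_leI) simp
  also have "\<dots> < \<infinity>"
    using F_integrable by (simp add: integrable_iff_bounded)
  finally have "integrable (lborel \<Otimes>\<^sub>M lborel) (case_prod g)"
    by (simp add: integrable_iff_bounded)
  then have "(\<integral>s. (\<integral>x. g x s \<partial>lborel) \<partial>lborel) = (\<integral>x. (\<integral>s. g x s \<partial>lborel) \<partial>lborel)"
    by (rule lborel_pair.Fubini_integral)
  also have "\<dots> = fourier_transform F t"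
    unfolding fourier_transform_def
  proof (rule integral_cong_AE)
    show "AE x in lborel. (\<integral>s. g x s \<partial>lborel) = exp (\<i> * complex_of_real (x * t)) * complex_of_real (F x)"
      using K_integral by eventually_elim (simp add: g_def has_bochner_integral_iff)
  qed (use F_integrable in \<open>auto simp: g_def\<close>)
  finally show ?thesis by (simp add: g_def fourier_transform_def)
qed

lemma Gamma_real_nonzero: "(x::real) > 0 \<Longrightarrow> Gamma x \<noteq> 0"
  using Gamma_real_pos[of x] by linarith

lemma Gamma_reflection_real: "Gamma x * Gamma (1 - x) = pi / sin (pi * x)"
proof -
  have "complex_of_real (Gamma x * Gamma (1 - x)) = Gamma (complex_of_real x) * Gamma (1 - complex_of_real x)"
    by (simp flip: Gamma_complex_of_real)
  also have "\<dots> = complex_of_real (pi / sin (pi * x))"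
    by (simp add: Gamma_reflection_complex sin_of_real flip: of_real_mult)
  finally show ?thesis by (simp only: of_real_eq_iff)
qed

lemma Gamma_legendre_duplication_real:
  fixes x :: real assumes "x > 0"
  shows "Gamma x * Gamma (x + 1/2) = 2 powr (1 - 2 * x) * sqrt pi * Gamma (2 * x)"
proof -
  have not_nonpos: "complex_of_real y \<notin> \<int>\<^sub>\<le>\<^sub>0" if "y > 0" for y
    using that by (auto elim!: nonpos_Ints_cases simp: complex_eq_iff)
  have "complex_of_real (Gamma x * Gamma (x + 1/2)) = Gamma (complex_of_real x) * Gamma (complex_of_real x + 1/2)"
    by (simp flip: Gamma_complex_of_real)
  also have "\<dots> = exp ((1 - 2 * complex_of_real x) * of_real (ln 2)) * of_real (sqrt pi) * Gamma (2 * complex_of_real x)"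
    using not_nonpos[of x] not_nonpos[of "x + 1/2"] assms by (intro Gamma_legendre_duplication) auto
  also have "\<dots> = complex_of_real (2 powr (1 - 2 * x) * sqrt pi * Gamma (2 * x))"
  proof -
    have "(1 - 2 * complex_of_real x) * of_real (ln 2) = of_real ((1 - 2 * x) * ln 2)"
      "2 * complex_of_real x = of_real (2 * x)"
      by simp_all
    then show ?thesis
      by (simp only: exp_of_real Gamma_complex_of_real flip: of_real_mult) (simp add: powr_def mult_ac)
  qed
  finally show ?thesis by (simp only: of_real_eq_iff)
qed

lemma Gamma_duplication_reflection_identity:
  fixes \<alpha> :: real assumes "0 < \<alpha>" "\<alpha> < 1/2"
  shows "sqrt pi * 2 powr (1 - 2 * \<alpha>) * Gamma (1/2 - \<alpha>) * cos (pi * \<alpha>) * Gamma (2 * \<alpha>) = pi * Gamma \<alpha>"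
proof -
  have reflection: "Gamma (1/2 - \<alpha>) * Gamma (\<alpha> + 1/2) * cos (pi * \<alpha>) = pi"
  proof -
    have "sin (pi * (1/2 - \<alpha>)) = cos (pi * \<alpha>)"
      by (simp add: right_diff_distrib sin_diff)
    moreover have "cos (pi * \<alpha>) > 0"
      using assms by (intro cos_gt_zero) auto
    ultimately show ?thesis
      using Gamma_reflection_real[of "1/2 - \<alpha>"] by (simp add: field_simps)
  qed
  have "sqrt pi * 2 powr (1 - 2 * \<alpha>) * Gamma (1/2 - \<alpha>) * cos (pi * \<alpha>) * Gamma (2 * \<alpha>)
      = Gamma (1/2 - \<alpha>) * cos (pi * \<alpha>) * (Gamma \<alpha> * Gamma (\<alpha> + 1/2))"
    using Gamma_legendre_duplication_real[of \<alpha>] assms by (simp add: mult_ac)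
  also have "\<dots> = pi * Gamma \<alpha>"
    using reflection by (simp add: mult_ac)
  finally show ?thesis .
qed

(* Since |x|^(-2\<alpha>) = \<Gamma>(\<alpha>)\<inverse> \<integral>\<^sub>0\<^sup>\<infinity> a^(\<alpha>-1) e^(-ax\<^sup>2) da, Phi \<alpha> b t is \<Gamma>(\<alpha>) times the Fourier transform
   of |x|^(-2\<alpha>) e^(-bx\<^sup>2) at t; its density is a^(\<alpha>-1) times the Fourier transform
   \<surd>(\<pi>/(a+b)) e^(-t\<^sup>2/(4(a+b))) of e^(-(a+b)x\<^sup>2). *)

definition Phi_density :: "real \<Rightarrow> real \<Rightarrow> real \<Rightarrow> real \<Rightarrow> real" where
  "Phi_density \<alpha> b t a = indicator {0<..} a * (a powr (\<alpha> - 1) * (sqrt (pi / (a + b)) * exp (-(t\<^sup>2) / (4 * (a + b)))))"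

definition Phi :: "real \<Rightarrow> real \<Rightarrow> real \<Rightarrow> real" where
  "Phi \<alpha> b t = (\<integral>a. Phi_density \<alpha> b t a \<partial>lborel)"

definition Phi_majorant :: "real \<Rightarrow> real \<Rightarrow> real" where
  "Phi_majorant \<alpha> a = sqrt pi * (indicator {0..1} a * a powr (\<alpha> - 1) + indicator {1..} a * a powr (\<alpha> - 3/2))"

lemma borel_measurable_Phi_density [measurable]:
  "(\<lambda>(b, a). Phi_density \<alpha> b t a) \<in> borel_measurable (borel \<Otimes>\<^sub>M lborel)"
  "Phi_density \<alpha> b t \<in> borel_measurable borel"
  unfolding Phi_density_def by measurable

lemma borel_measurable_Phi [measurable]: "(\<lambda>b. Phi \<alpha> b t) \<in> borel_measurable borel"
  unfolding Phi_def by (rule lborel.borel_measurable_lebesgue_integral) simp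

lemma Phi_density_nonneg: "b \<ge> 0 \<Longrightarrow> 0 \<le> Phi_density \<alpha> b t a"
  by (auto simp: Phi_density_def indicator_def intro!: mult_nonneg_nonneg)

lemma integrable_Phi_majorant:
  fixes \<alpha> :: real assumes "0 < \<alpha>" "\<alpha> < 1/2"
  shows "integrable lborel (Phi_majorant \<alpha>)"
proof -
  have "has_bochner_integral lborel (\<lambda>a. indicator {0..1} a * a powr (\<alpha> - 1)) (1 powr ((\<alpha> - 1) + 1) / ((\<alpha> - 1) + 1))"
    by (rule has_bochner_integral_lborel_of_has_integral[OF has_integral_powr_from_0]) (use assms in auto)
  moreover have "has_bochner_integral lborel (\<lambda>a. indicator {1..} a * a powr (\<alpha> - 3/2))
      (-(1 powr ((\<alpha> - 3/2) + 1)) / ((\<alpha> - 3/2) + 1))"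
    by (rule has_bochner_integral_lborel_of_has_integral[OF has_integral_powr_to_inf]) (use assms in auto)
  ultimately show ?thesis
    unfolding Phi_majorant_def by (auto simp: has_bochner_integral_iff)
qed

lemma sqrt_pi_div_mult_exp_le:
  fixes y :: real assumes y: "y > 0"
  shows "sqrt (pi / y) * exp (-1 / (4 * y)) \<le> sqrt pi"
proof -
  define u where "u = 1 / (4 * y)"
  have u: "u > 0" using y by (simp add: u_def)
  \<comment> \<open>\<open>\<surd>(4u) \<le> 1 + u\<close> is AM-GM, and \<open>1 + u \<le> e\<^sup>u\<close>\<close>
  have "sqrt (4 * u) \<le> sqrt ((1 + u)\<^sup>2)"
    using zero_le_power2[of "1 - u"] by (intro real_sqrt_le_mono) (simp add: power2_eq_square algebra_simps)
  also have "\<dots> \<le> exp u" using u exp_ge_add_one_self[of u] by simp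
  finally have "sqrt (4 * u) / exp u \<le> 1" by simp
  then have "sqrt pi * (sqrt (4 * u) / exp u) \<le> sqrt pi"
    by (intro mult_left_le) auto
  moreover have "sqrt (pi / y) * exp (-1 / (4 * y)) = sqrt pi * (sqrt (4 * u) / exp u)"
    using y by (simp add: u_def exp_minus field_simps flip: real_sqrt_mult)
  ultimately show ?thesis by linarith
qed

lemma abs_Phi_density_le_majorant:
  fixes \<alpha> b a :: real assumes b: "b \<ge> 0"
  shows "\<bar>Phi_density \<alpha> b 1 a\<bar> \<le> Phi_majorant \<alpha> a"
proof (cases "a > 0")
  case False
  then show ?thesis by (simp add: Phi_density_def Phi_majorant_def indicator_def)
next
  case a: True
  define g where "g = sqrt (pi / (a + b)) * exp (-1 / (4 * (a + b)))"
  have density: "\<bar>Phi_density \<alpha> b 1 a\<bar> = a powr (\<alpha> - 1) * g"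
    using a b by (simp add: Phi_density_def g_def)
  show ?thesis
  proof (cases "a \<le> 1")
    case True
    have "g \<le> sqrt pi"
      unfolding g_def using a b by (intro sqrt_pi_div_mult_exp_le) simp
    then have "a powr (\<alpha> - 1) * g \<le> sqrt pi * a powr (\<alpha> - 1)"
      by (subst mult.commute) (intro mult_right_mono; simp)
    also have "\<dots> \<le> Phi_majorant \<alpha> a"
      using a True by (simp add: Phi_majorant_def indicator_def)
    finally show ?thesis using density by simp
  next
    case False
    have "g \<le> sqrt (pi / a) * 1"
      unfolding g_def using a b
      by (intro mult_mono real_sqrt_le_mono divide_left_mono) (auto simp: add_pos_nonneg)
    also have "\<dots> = sqrt pi * a powr (-1/2)"
      using a by (simp add: real_sqrt_divide powr_minus_divide powr_half_sqrt)
    finally have "a powr (\<alpha> - 1) * g \<le> a powr (\<alpha> - 1) * (sqrt pi * a powr (-1/2))"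
      by (intro mult_left_mono) auto
    also have "\<dots> = Phi_majorant \<alpha> a"
      using a False by (simp add: Phi_majorant_def indicator_def mult_ac flip: powr_add)
    finally show ?thesis using density by simp
  qed
qed

lemma integrable_Phi_density:
  fixes \<alpha> b :: real assumes "0 < \<alpha>" "\<alpha> < 1/2" "b \<ge> 0"
  shows "integrable lborel (Phi_density \<alpha> b 1)"
proof (rule Bochner_Integration.integrable_bound[OF integrable_Phi_majorant[OF assms(1,2)]])
  show "AE a in lborel. norm (Phi_density \<alpha> b 1 a) \<le> norm (Phi_majorant \<alpha> a)"
    using abs_Phi_density_le_majorant[OF assms(3)] by (intro AE_I2) (auto intro: order_trans[OF _ abs_ge_self])
qed simp

lemma Phi_bounds:
  fixes \<alpha> b :: real assumes "0 < \<alpha>" "\<alpha> < 1/2" "b \<ge> 0"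
  shows "0 \<le> Phi \<alpha> b 1" "Phi \<alpha> b 1 \<le> (\<integral>a. Phi_majorant \<alpha> a \<partial>lborel)"
  unfolding Phi_def
  using Phi_density_nonneg abs_Phi_density_le_majorant[of b \<alpha>] assms
  by (auto intro!: integral_nonneg integral_mono integrable_Phi_density integrable_Phi_majorant)

lemma Phi_zero:
  fixes \<alpha> :: real assumes "\<alpha> < 1/2"
  shows "Phi \<alpha> 0 1 = sqrt pi * 2 powr (1 - 2 * \<alpha>) * Gamma (1/2 - \<alpha>)"
proof -
  have density: "Phi_density \<alpha> 0 1 a
      = sqrt pi * (indicator {0<..} a * (a powr (-(1/2 - \<alpha>) - 1) * exp (-((1/4) / a))))" for a
  proof (cases "a > 0")
    case True
    then have "sqrt (pi / a) = sqrt pi * a powr (-1/2)"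
      by (simp add: real_sqrt_divide powr_minus_divide powr_half_sqrt)
    moreover have "a powr (\<alpha> - 1) * a powr (-1/2) = a powr (-(1/2 - \<alpha>) - 1)"
      by (simp add: powr_add[symmetric])
    ultimately show ?thesis
      using True by (simp add: Phi_density_def mult_ac)
  qed (simp add: Phi_density_def)
  have "(1/4 :: real) powr (-(1/2 - \<alpha>)) = 2 powr (1 - 2 * \<alpha>)"
    using powr_powr[of 2 "-2" "-(1/2 - \<alpha>)"] by (simp add: powr_neg_numeral algebra_simps)
  then have "has_bochner_integral lborel (\<lambda>a. indicator {0<..} a * (a powr (-(1/2 - \<alpha>) - 1) * exp (-((1/4) / a))))
      (Gamma (1/2 - \<alpha>) * 2 powr (1 - 2 * \<alpha>))"
    using has_bochner_integral_Gamma_inverse[of "1/2 - \<alpha>" "1/4"] assms by simp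
  then show ?thesis
    unfolding Phi_def density by (simp add: has_bochner_integral_iff mult_ac)
qed

lemma Phi_scaling:
  fixes \<alpha> b t :: real assumes t: "t > 0" and b: "b \<ge> 0"
  shows "Phi \<alpha> b t = t powr (2 * \<alpha> - 1) * Phi \<alpha> (b / t\<^sup>2) 1"
proof -
  have density: "Phi_density \<alpha> b t (t\<^sup>2 * x) = t powr (2 * \<alpha> - 3) * Phi_density \<alpha> (b / t\<^sup>2) 1 x" for x
  proof (cases "x > 0")
    case x: True
    define y where "y = x + b / t\<^sup>2"
    have y: "y > 0" "t\<^sup>2 * x + b = t\<^sup>2 * y"
      using x b t by (simp_all add: y_def add_pos_nonneg ring_distribs)
    have "(t\<^sup>2 * x) powr (\<alpha> - 1) = t powr (2 * \<alpha> - 2) * x powr (\<alpha> - 1)"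
      using t x by (simp add: powr_mult power2_powr algebra_simps)
    moreover have "sqrt (pi / (t\<^sup>2 * x + b)) = sqrt (pi / y) / t"
      using t y by (simp add: real_sqrt_divide real_sqrt_mult)
    moreover have "t\<^sup>2 / (4 * (t\<^sup>2 * x + b)) = 1 / (4 * y)"
      using t y by simp
    moreover have "t powr (2 * \<alpha> - 3) = t powr (2 * \<alpha> - 2) / t"
      using t by (simp add: powr_diff power3_eq_cube power2_eq_square)
    ultimately show ?thesis
      using x t by (simp add: Phi_density_def y_def mult_ac)
  qed (use t in \<open>simp add: Phi_density_def zero_less_mult_iff\<close>)
  have "Phi \<alpha> b t = t\<^sup>2 * (\<integral>x. Phi_density \<alpha> b t (0 + t\<^sup>2 * x) \<partial>lborel)"
    unfolding Phi_def using lborel_integral_real_affine[of "t\<^sup>2" "Phi_density \<alpha> b t" 0] t by simp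
  also have "\<dots> = t\<^sup>2 * t powr (2 * \<alpha> - 3) * Phi \<alpha> (b / t\<^sup>2) 1"
    by (simp add: density Phi_def)
  also have "t\<^sup>2 * t powr (2 * \<alpha> - 3) = t powr (2 * \<alpha> - 1)"
    using t powr_add[of t 2 "2 * \<alpha> - 3"] by simp
  finally show ?thesis .
qed

lemma tendsto_Phi_at_top:
  fixes \<alpha> b :: real assumes \<alpha>: "0 < \<alpha>" "\<alpha> < 1/2" and b: "b \<ge> 0"
  shows "((\<lambda>t. Phi \<alpha> (b / t\<^sup>2) 1) \<longlongrightarrow> Phi \<alpha> 0 1) at_top"
  unfolding Phi_def
proof (rule integral_dominated_convergence_at_top[OF _ _ integrable_Phi_majorant[OF \<alpha>]])
  have shrink: "((\<lambda>t. b / t\<^sup>2) \<longlongrightarrow> 0) at_top"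
    by (intro tendsto_divide_0[OF tendsto_const] filterlim_at_top_imp_at_infinity
        filterlim_pow_at_top filterlim_ident) simp
  have "((\<lambda>t. Phi_density \<alpha> (b / t\<^sup>2) 1 x) \<longlongrightarrow> Phi_density \<alpha> 0 1 x) at_top" for x
  proof (cases "x > 0")
    case True
    then have "isCont (\<lambda>\<epsilon>. Phi_density \<alpha> \<epsilon> 1 x) 0"
      unfolding Phi_density_def by (intro continuous_intros) auto
    from isCont_tendsto_compose[OF this shrink] show ?thesis .
  qed (simp add: Phi_density_def)
  then show "AE x in lborel. ((\<lambda>t. Phi_density \<alpha> (b / t\<^sup>2) 1 x) \<longlongrightarrow> Phi_density \<alpha> 0 1 x) at_top"
    by simp
  show "\<forall>\<^sub>F t in at_top. AE x in lborel. norm (Phi_density \<alpha> (b / t\<^sup>2) 1 x) \<le> Phi_majorant \<alpha> x"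
    using abs_Phi_density_le_majorant b by (intro always_eventually allI AE_I2) simp
qed simp_all

lemma integrable_spec_dens:
  fixes C \<alpha> \<beta> :: real
  assumes "0 \<le> C" "\<alpha> < 1/2" "0 \<le> \<beta>" "\<alpha> + \<beta> > 1/2"
  shows "integrable lborel (spec_dens C \<alpha> \<beta>)"
proof (rule integrable_lborel_powr_bounds[where p = "2 * \<alpha>" and q = "2 * \<alpha> + 2 * \<beta>" and D = C])
  show "spec_dens C \<alpha> \<beta> \<in> borel_measurable borel"
    unfolding spec_dens_def by measurable
next
  fix x :: real
  have "(1 + x\<^sup>2) powr (-\<beta>) \<le> 1"
    using assms powr_mono[of "-\<beta>" 0 "1 + x\<^sup>2"] zero_le_power2[of x] by (auto split: if_splits)
  then show "\<bar>spec_dens C \<alpha> \<beta> x\<bar> \<le> C * \<bar>x\<bar> powr (- (2 * \<alpha>))"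
    using assms unfolding spec_dens_def by (simp add: abs_mult mult_left_le)
next
  fix x :: real assume x: "\<bar>x\<bar> > 1"
  have "(1 + x\<^sup>2) powr (-\<beta>) \<le> (x\<^sup>2) powr (-\<beta>)"
    by (rule powr_mono2') (use assms x in auto)
  also have "\<dots> = \<bar>x\<bar> powr (-2 * \<beta>)"
    using x by (simp add: power2_powr)
  finally have "(1 + x\<^sup>2) powr (-\<beta>) \<le> \<bar>x\<bar> powr (-2 * \<beta>)" .
  then have "\<bar>spec_dens C \<alpha> \<beta> x\<bar> \<le> C * \<bar>x\<bar> powr (-2 * \<alpha>) * \<bar>x\<bar> powr (-2 * \<beta>)"
    using assms unfolding spec_dens_def by (simp add: abs_mult mult_left_mono)
  also have "\<dots> = C * \<bar>x\<bar> powr (- (2 * \<alpha> + 2 * \<beta>))"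
    by (simp add: mult.assoc flip: powr_add)
  finally show "\<bar>spec_dens C \<alpha> \<beta> x\<bar> \<le> C * \<bar>x\<bar> powr (- (2 * \<alpha> + 2 * \<beta>))" .
qed (use assms in auto)

lemma integrable_abs_powr_gaussian:
  fixes \<alpha> b :: real
  assumes "0 \<le> \<alpha>" "\<alpha> < 1/2" "b > 0"
  shows "integrable lborel (\<lambda>x. \<bar>x\<bar> powr (-2 * \<alpha>) * exp (-(b * x\<^sup>2)))"
proof (rule integrable_lborel_powr_bounds[where p = "2 * \<alpha>" and q = 2 and D = "max 1 (1 / b)"])
  fix x :: real
  have "\<bar>x\<bar> powr (-2 * \<alpha>) * exp (-(b * x\<^sup>2)) \<le> \<bar>x\<bar> powr (-2 * \<alpha>)"
    using assms by (intro mult_left_le) auto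
  also have "\<dots> \<le> max 1 (1 / b) * \<bar>x\<bar> powr (-2 * \<alpha>)"
    using mult_right_mono[of 1 "max 1 (1 / b)" "\<bar>x\<bar> powr (-2 * \<alpha>)"] by simp
  finally show "\<bar>\<bar>x\<bar> powr (-2 * \<alpha>) * exp (-(b * x\<^sup>2))\<bar> \<le> max 1 (1 / b) * \<bar>x\<bar> powr (- (2 * \<alpha>))"
    by simp
next
  fix x :: real assume x: "\<bar>x\<bar> > 1"
  have "b * x\<^sup>2 \<le> exp (b * x\<^sup>2)"
    using exp_ge_add_one_self[of "b * x\<^sup>2"] by linarith
  then have "exp (-(b * x\<^sup>2)) \<le> 1 / (b * x\<^sup>2)"
    using assms x by (simp add: exp_minus field_simps)
  moreover have "\<bar>x\<bar> powr (-2 * \<alpha>) \<le> 1"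
    using assms x powr_mono[of "-2 * \<alpha>" 0 "\<bar>x\<bar>"] by (auto split: if_splits)
  ultimately have "\<bar>x\<bar> powr (-2 * \<alpha>) * exp (-(b * x\<^sup>2)) \<le> 1 * (1 / (b * x\<^sup>2))"
    by (intro mult_mono) auto
  also have "\<dots> \<le> max 1 (1 / b) * \<bar>x\<bar> powr (-2)"
    using x assms by (simp add: powr_minus power2_eq_square divide_simps)
  finally show "\<bar>\<bar>x\<bar> powr (-2 * \<alpha>) * exp (-(b * x\<^sup>2))\<bar> \<le> max 1 (1 / b) * \<bar>x\<bar> powr (-2)"
    by simp
qed (use assms in auto)

lemma fourier_transform_abs_powr_gaussian:
  fixes \<alpha> b t :: real assumes \<alpha>: "0 < \<alpha>" "\<alpha> < 1/2" and b: "b > 0"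
  shows "fourier_transform (\<lambda>x. \<bar>x\<bar> powr (-2 * \<alpha>) * exp (-(b * x\<^sup>2))) t = complex_of_real (Phi \<alpha> b t / Gamma \<alpha>)"
proof -
  define K where "K = (\<lambda>x a::real. indicator {0<..} a * a powr (\<alpha> - 1) / Gamma \<alpha> * exp (-((a + b) * x\<^sup>2)))"
  have "fourier_transform (\<lambda>x. \<bar>x\<bar> powr (-2 * \<alpha>) * exp (-(b * x\<^sup>2))) t
      = (\<integral>a. fourier_transform (\<lambda>x. K x a) t \<partial>lborel)"
  proof (rule fourier_transform_mixture)
    show "case_prod K \<in> borel_measurable (lborel \<Otimes>\<^sub>M lborel)"
      unfolding K_def by measurable
    show "0 \<le> K x a" for x a
      using \<alpha> by (simp add: K_def)
    have kernel_integral: "has_bochner_integral lborel (K x) (\<bar>x\<bar> powr (-2 * \<alpha>) * exp (-(b * x\<^sup>2)))"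
      if "x \<noteq> 0" for x
    proof -
      have "has_bochner_integral lborel (\<lambda>a. indicator {0<..} a * (a powr (\<alpha> - 1) * exp (-(x\<^sup>2 * a))))
              (Gamma \<alpha> * (x\<^sup>2) powr (-\<alpha>))"
        using \<alpha> that by (intro has_bochner_integral_Gamma_scaled) auto
      then have "has_bochner_integral lborel
              (\<lambda>a. indicator {0<..} a * (a powr (\<alpha> - 1) * exp (-(x\<^sup>2 * a))) * (exp (-(b * x\<^sup>2)) / Gamma \<alpha>))
              (Gamma \<alpha> * (x\<^sup>2) powr (-\<alpha>) * (exp (-(b * x\<^sup>2)) / Gamma \<alpha>))"
        by (rule has_bochner_integral_mult_left)
      moreover have "K x = (\<lambda>a. indicator {0<..} a * (a powr (\<alpha> - 1) * exp (-(x\<^sup>2 * a))) *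
          (exp (-(b * x\<^sup>2)) / Gamma \<alpha>))"
        by (auto simp: K_def fun_eq_iff algebra_simps simp flip: exp_add)
      ultimately show ?thesis
        using \<alpha> that by (simp add: power2_powr Gamma_real_nonzero)
    qed
    show "AE x in lborel. has_bochner_integral lborel (K x) (\<bar>x\<bar> powr (-2 * \<alpha>) * exp (-(b * x\<^sup>2)))"
      using AE_lborel_singleton[of 0] by eventually_elim (rule kernel_integral)
    show "integrable lborel (\<lambda>x. \<bar>x\<bar> powr (-2 * \<alpha>) * exp (-(b * x\<^sup>2)))"
      using \<alpha> b by (intro integrable_abs_powr_gaussian) auto
  qed
  also have "\<dots> = (\<integral>a. complex_of_real (Phi_density \<alpha> b t a / Gamma \<alpha>) \<partial>lborel)"
  proof (rule Bochner_Integration.integral_cong[OF refl])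
    fix a :: real
    show "fourier_transform (\<lambda>x. K x a) t = complex_of_real (Phi_density \<alpha> b t a / Gamma \<alpha>)"
    proof (cases "a > 0")
      case True
      then show ?thesis
        using b fourier_transform_cmult[of "a powr (\<alpha> - 1) / Gamma \<alpha>" "\<lambda>x. exp (-((a + b) * x\<^sup>2))" t]
        by (simp add: K_def Phi_density_def fourier_transform_gaussian)
    qed (simp add: K_def Phi_density_def fourier_transform_def)
  qed
  also have "\<dots> = complex_of_real (Phi \<alpha> b t / Gamma \<alpha>)"
    unfolding Phi_def by simp
  finally show ?thesis .
qed

lemma cov_fun_Gamma_mixture:
  fixes C \<alpha> \<beta> t :: real
  assumes C: "0 \<le> C" and \<alpha>: "0 < \<alpha>" "\<alpha> < 1/2" and \<beta>: "\<beta> > 1/2"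
  shows "cov_fun C \<alpha> \<beta> t = complex_of_real (C / (Gamma \<alpha> * Gamma \<beta>) *
     (\<integral>b. indicator {0<..} b * (b powr (\<beta> - 1) * exp (-b) * Phi \<alpha> b t) \<partial>lborel))"
proof -
  define w where "w = (\<lambda>b::real. C / Gamma \<beta> * (indicator {0<..} b * (b powr (\<beta> - 1) * exp (-b))))"
  define K where "K = (\<lambda>x b. w b * (\<bar>x\<bar> powr (-2 * \<alpha>) * exp (-(b * x\<^sup>2))))"
  have "cov_fun C \<alpha> \<beta> t = (\<integral>b. fourier_transform (\<lambda>x. K x b) t \<partial>lborel)"
    unfolding cov_fun_eq_fourier_transform
  proof (rule fourier_transform_mixture)
    show "case_prod K \<in> borel_measurable (lborel \<Otimes>\<^sub>M lborel)"
      unfolding K_def w_def by measurable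
    show "0 \<le> K x b" for x b
      using C \<beta> by (simp add: K_def w_def)
    have "has_bochner_integral lborel (K x) (spec_dens C \<alpha> \<beta> x)" for x
    proof -
      have "has_bochner_integral lborel (\<lambda>b. indicator {0<..} b * (b powr (\<beta> - 1) * exp (-((1 + x\<^sup>2) * b))))
              (Gamma \<beta> * (1 + x\<^sup>2) powr (-\<beta>))"
        using \<beta> by (intro has_bochner_integral_Gamma_scaled) (auto simp: add_pos_nonneg)
      then have "has_bochner_integral lborel
              (\<lambda>b. C / Gamma \<beta> * \<bar>x\<bar> powr (-2 * \<alpha>) * (indicator {0<..} b * (b powr (\<beta> - 1) * exp (-((1 + x\<^sup>2) * b)))))
              (C / Gamma \<beta> * \<bar>x\<bar> powr (-2 * \<alpha>) * (Gamma \<beta> * (1 + x\<^sup>2) powr (-\<beta>)))"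
        by (rule has_bochner_integral_mult_right)
      moreover have "K x = (\<lambda>b. C / Gamma \<beta> * \<bar>x\<bar> powr (-2 * \<alpha>) *
          (indicator {0<..} b * (b powr (\<beta> - 1) * exp (-((1 + x\<^sup>2) * b)))))"
        by (auto simp: K_def w_def fun_eq_iff algebra_simps simp flip: exp_add)
      ultimately show ?thesis
        using \<beta> by (simp add: spec_dens_def Gamma_real_nonzero mult_ac)
    qed
    then show "AE x in lborel. has_bochner_integral lborel (K x) (spec_dens C \<alpha> \<beta> x)"
      by simp
    show "integrable lborel (spec_dens C \<alpha> \<beta>)"
      using assms by (intro integrable_spec_dens) auto
  qed
  also have "\<dots> = (\<integral>b. complex_of_real (w b * (Phi \<alpha> b t / Gamma \<alpha>)) \<partial>lborel)"
  proof (rule Bochner_Integration.integral_cong[OF refl])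
    fix b :: real
    show "fourier_transform (\<lambda>x. K x b) t = complex_of_real (w b * (Phi \<alpha> b t / Gamma \<alpha>))"
    proof (cases "b > 0")
      case True
      with fourier_transform_abs_powr_gaussian[OF \<alpha> True, of t] show ?thesis
        unfolding K_def fourier_transform_cmult by (simp add: w_def)
    qed (simp add: K_def w_def fourier_transform_def)
  qed
  also have "\<dots> = complex_of_real (C / (Gamma \<alpha> * Gamma \<beta>) *
     (\<integral>b. indicator {0<..} b * (b powr (\<beta> - 1) * exp (-b) * Phi \<alpha> b t) \<partial>lborel))"
    unfolding integral_complex_of_real
    by (simp add: w_def mult_ac flip: integral_mult_right_zero integral_divide_zero)
  finally show ?thesis .
qed

definition Phi_average :: "real \<Rightarrow> real \<Rightarrow> real \<Rightarrow> real" where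
  "Phi_average \<alpha> \<beta> t = (\<integral>b. indicator {0<..} b * (b powr (\<beta> - 1) * exp (-b) * Phi \<alpha> (b / t\<^sup>2) 1) \<partial>lborel)"

lemma cov_fun_scaling:
  fixes C \<alpha> \<beta> t :: real
  assumes "0 \<le> C" "0 < \<alpha>" "\<alpha> < 1/2" "\<beta> > 1/2" "t > 0"
  shows "cov_fun C \<alpha> \<beta> t = complex_of_real (C / (Gamma \<alpha> * Gamma \<beta>) * t powr (2 * \<alpha> - 1) * Phi_average \<alpha> \<beta> t)"
proof -
  have "(\<integral>b. indicator {0<..} b * (b powr (\<beta> - 1) * exp (-b) * Phi \<alpha> b t) \<partial>lborel)
      = (\<integral>b. t powr (2 * \<alpha> - 1) * (indicator {0<..} b * (b powr (\<beta> - 1) * exp (-b) * Phi \<alpha> (b / t\<^sup>2) 1)) \<partial>lborel)"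
  proof (rule Bochner_Integration.integral_cong[OF refl])
    show "indicator {0<..} b * (b powr (\<beta> - 1) * exp (-b) * Phi \<alpha> b t)
      = t powr (2 * \<alpha> - 1) * (indicator {0<..} b * (b powr (\<beta> - 1) * exp (-b) * Phi \<alpha> (b / t\<^sup>2) 1))" for b
      using Phi_scaling[OF \<open>t > 0\<close>, of b \<alpha>] by (cases "b > 0") (simp_all add: mult_ac)
  qed
  then show ?thesis
    unfolding cov_fun_Gamma_mixture[OF assms(1-4)] integral_mult_right_zero Phi_average_def by (simp add: mult_ac)
qed

lemma tendsto_Phi_average:
  fixes \<alpha> \<beta> :: real assumes \<alpha>: "0 < \<alpha>" "\<alpha> < 1/2" and \<beta>: "\<beta> > 0"
  shows "(Phi_average \<alpha> \<beta> \<longlongrightarrow> Gamma \<beta> * Phi \<alpha> 0 1) at_top"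
proof -
  define g where "g = (\<lambda>b::real. indicator {0<..} b * (b powr (\<beta> - 1) * exp (-b)))"
  define M where "M = (\<integral>a. Phi_majorant \<alpha> a \<partial>lborel)"
  have "has_bochner_integral lborel g (Gamma \<beta>)"
    using has_bochner_integral_Gamma_scaled[OF \<beta>, of 1] by (simp add: g_def)
  then have g: "integrable lborel g" "(\<integral>b. g b \<partial>lborel) = Gamma \<beta>"
    by (auto simp: has_bochner_integral_iff)
  have "((\<lambda>t. \<integral>b. g b * Phi \<alpha> (b / t\<^sup>2) 1 \<partial>lborel) \<longlongrightarrow> (\<integral>b. g b * Phi \<alpha> 0 1 \<partial>lborel)) at_top"
  proof (rule integral_dominated_convergence_at_top[where w = "\<lambda>b. M * g b"])
    show "integrable lborel (\<lambda>b. M * g b)"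
      using g by simp
    have "((\<lambda>t. g b * Phi \<alpha> (b / t\<^sup>2) 1) \<longlongrightarrow> g b * Phi \<alpha> 0 1) at_top" for b
      using \<alpha> by (cases "b > 0") (auto simp: g_def intro!: tendsto_intros tendsto_Phi_at_top)
    then show "AE b in lborel. ((\<lambda>t. g b * Phi \<alpha> (b / t\<^sup>2) 1) \<longlongrightarrow> g b * Phi \<alpha> 0 1) at_top"
      by simp
    have "norm (g b * Phi \<alpha> (b / t\<^sup>2) 1) \<le> M * g b" for b t
      using Phi_bounds[OF \<alpha>, of "b / t\<^sup>2"]
      by (cases "b > 0") (simp_all add: g_def M_def mult_right_mono mult.commute)
    then show "\<forall>\<^sub>F t in at_top. AE b in lborel. norm (g b * Phi \<alpha> (b / t\<^sup>2) 1) \<le> M * g b"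
      by simp
  qed (simp_all add: g_def)
  then have "((\<lambda>t. \<integral>b. g b * Phi \<alpha> (b / t\<^sup>2) 1 \<partial>lborel) \<longlongrightarrow> Gamma \<beta> * Phi \<alpha> 0 1) at_top"
    by (simp add: g(2) mult.commute)
  then show ?thesis
    unfolding Phi_average_def[abs_def] by (simp add: g_def mult_ac)
qed

theorem lemma4p2:
  fixes C \<alpha> \<beta> :: real
  assumes "0 < C" and "0 < \<alpha>" and "\<alpha> < 1/2" and "\<beta> > 1/2"
  shows "cov_fun C \<alpha> \<beta> \<sim>[at_top]
           (\<lambda>t. complex_of_real (t powr (2 * \<alpha> - 1) *
                 (pi * C / (cos (pi * \<alpha>) * Gamma (2 * \<alpha>)))))"
proof (rule asymp_equivI')
  define c where "c = pi * C / (cos (pi * \<alpha>) * Gamma (2 * \<alpha>))"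
  have cos_pos: "cos (pi * \<alpha>) > 0"
    using assms by (intro cos_gt_zero) auto
  then have c_pos: "c > 0"
    using assms by (simp add: c_def)
  have "\<forall>\<^sub>F t in at_top. cov_fun C \<alpha> \<beta> t / complex_of_real (t powr (2 * \<alpha> - 1) * c)
      = complex_of_real (C / (Gamma \<alpha> * Gamma \<beta>) * Phi_average \<alpha> \<beta> t / c)"
    using eventually_gt_at_top[of 0]
    by eventually_elim (use assms c_pos in \<open>simp add: cov_fun_scaling field_simps\<close>)
  moreover have "((\<lambda>t. complex_of_real (C / (Gamma \<alpha> * Gamma \<beta>) * Phi_average \<alpha> \<beta> t / c))
      \<longlongrightarrow> complex_of_real (C / (Gamma \<alpha> * Gamma \<beta>) * (Gamma \<beta> * Phi \<alpha> 0 1) / c)) at_top"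
    using assms c_pos by (intro tendsto_intros tendsto_Phi_average) auto
  moreover have "C / (Gamma \<alpha> * Gamma \<beta>) * (Gamma \<beta> * Phi \<alpha> 0 1) = c"
    using Gamma_duplication_reflection_identity[of \<alpha>] Phi_zero[of \<alpha>] assms cos_pos
    unfolding c_def by (simp add: Gamma_real_nonzero field_simps)
  ultimately show "((\<lambda>t. cov_fun C \<alpha> \<beta> t / complex_of_real (t powr (2 * \<alpha> - 1) * c)) \<longlongrightarrow> 1) at_top"
    using c_pos tendsto_cong by fastforce
qed

end
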